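(* If a generalised binary matrix $\mathbf{Y}$ is minimally non-firm, then $i(\mathbf{Y})=br(\mathbf{Y})-1$.
   Context: A generalised binary matrix is a matrix with entries in $\{0,1,?\}$. For such $\mathbf{Y}$, $\mathrm{supp}(\mathbf{Y})=\{(i,j):y_{i,j}=1\}$. A submatrix indexed by $I\times J$ is obtained by deleting rows not in $I$ and columns not in $J$; it is proper if it omits at least one row or column. A rectangle of $\mathbf{Y}$ is a set $I\times J$ of positions containing no entry equal to $0$. An isolated set is a subset of $\mathrm{supp}(\mathbf{Y})$ no two distinct elements of which lie in a common rectangle; $i(\mathbf{Y})$ is the maximum size of an isolated set. $br(\mathbf{Y})$ is the minimum number of rectangles whose union contains $\mathrm{supp}(\mathbf{Y})$ ($?$ entries need not be covered). $\mathbf{Y}$ is minimally non-firm if $i(\mathbf{Y})<br(\mathbf{Y})$ and $i(\mathbf{Y}')=br(\mathbf{Y}')$ for every proper submatrix $\mathbf{Y}'$ of $\mathbf{Y}$. *)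

theory Defs
  imports Main
begin

text \<open>Entries of a generalised binary matrix: 0, 1 or ?.\<close>
datatype gentry = Zero | One | Unknown

text \<open>A generalised binary matrix is given by a finite set R of row indices,
a finite set C of column indices and an entry function Y.  The submatrix
indexed by I \<times> J (I \<subseteq> R, J \<subseteq> C) is the same entry function with
row set I and column set J.\<close>

definition supp :: "'r set \<Rightarrow> 'c set \<Rightarrow> ('r \<Rightarrow> 'c \<Rightarrow> gentry) \<Rightarrow> ('r \<times> 'c) set" where
  "supp R C Y = {(i, j). i \<in> R \<and> j \<in> C \<and> Y i j = One}"

definition is_rectangle :: "'r set \<Rightarrow> 'c set \<Rightarrow> ('r \<Rightarrow> 'c \<Rightarrow> gentry) \<Rightarrow> 'r set \<Rightarrow> 'c set \<Rightarrow> bool" where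
  "is_rectangle R C Y I J \<longleftrightarrow> I \<subseteq> R \<and> J \<subseteq> C \<and> (\<forall>i\<in>I. \<forall>j\<in>J. Y i j \<noteq> Zero)"

definition isolated_set :: "'r set \<Rightarrow> 'c set \<Rightarrow> ('r \<Rightarrow> 'c \<Rightarrow> gentry) \<Rightarrow> ('r \<times> 'c) set \<Rightarrow> bool" where
  "isolated_set R C Y S \<longleftrightarrow> S \<subseteq> supp R C Y \<and>
     (\<forall>x\<in>S. \<forall>y\<in>S. x \<noteq> y \<longrightarrow> \<not> (\<exists>I J. is_rectangle R C Y I J \<and> x \<in> I \<times> J \<and> y \<in> I \<times> J))"

definition isol_num :: "'r set \<Rightarrow> 'c set \<Rightarrow> ('r \<Rightarrow> 'c \<Rightarrow> gentry) \<Rightarrow> nat" where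
  "isol_num R C Y = Max {card S | S. isolated_set R C Y S}"

definition br :: "'r set \<Rightarrow> 'c set \<Rightarrow> ('r \<Rightarrow> 'c \<Rightarrow> gentry) \<Rightarrow> nat" where
  "br R C Y = (LEAST k. \<exists>F. finite F \<and> card F = k \<and>
      (\<forall>(I, J)\<in>F. is_rectangle R C Y I J) \<and> supp R C Y \<subseteq> (\<Union>(I, J)\<in>F. I \<times> J))"

definition minimally_non_firm :: "'r set \<Rightarrow> 'c set \<Rightarrow> ('r \<Rightarrow> 'c \<Rightarrow> gentry) \<Rightarrow> bool" where
  "minimally_non_firm R C Y \<longleftrightarrow> isol_num R C Y < br R C Y \<and>
     (\<forall>I J. I \<subseteq> R \<longrightarrow> J \<subseteq> C \<longrightarrow> (I \<noteq> R \<or> J \<noteq> C) \<longrightarrow> isol_num I J Y = br I J Y)"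

end

theory Submission
  imports Defs
begin

text \<open>Deleting a row r from a minimally non-firm matrix leaves a firm submatrix.  Every isolated
set of the submatrix is still isolated in the whole matrix, while any rectangle cover of the
submatrix becomes one of the whole matrix after adding the single rectangle formed by the
non-zero entries of row r.  Hence br(Y) - 1 \<le> br(Y') = i(Y') \<le> i(Y) < br(Y).\<close>

definition rectangle_cover ::
    "'r set \<Rightarrow> 'c set \<Rightarrow> ('r \<Rightarrow> 'c \<Rightarrow> gentry) \<Rightarrow> ('r set \<times> 'c set) set \<Rightarrow> bool" where
  "rectangle_cover R C Y F \<longleftrightarrow> finite F \<and> (\<forall>(I, J)\<in>F. is_rectangle R C Y I J) \<and>
     supp R C Y \<subseteq> (\<Union>(I, J)\<in>F. I \<times> J)"

lemma br_eq_Least_rectangle_cover: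
  "br R C Y = (LEAST k. \<exists>F. rectangle_cover R C Y F \<and> card F = k)"
  unfolding br_def rectangle_cover_def by (intro arg_cong[where f = Least] ext) blast

lemma finite_supp: "finite R \<Longrightarrow> finite C \<Longrightarrow> finite (supp R C Y)"
  by (rule finite_subset[of _ "R \<times> C"]) (auto simp: supp_def)

lemma br_le_card: "rectangle_cover R C Y F \<Longrightarrow> br R C Y \<le> card F"
  unfolding br_eq_Least_rectangle_cover by (rule Least_le) blast

lemma rectangle_cover_singletons:
  assumes "finite R" "finite C"
  shows "rectangle_cover R C Y ((\<lambda>(i, j). ({i}, {j})) ` supp R C Y)"
  using finite_supp[OF assms] by (auto simp: rectangle_cover_def supp_def is_rectangle_def)

lemma br_attained:
  assumes "finite R" "finite C"
  obtains F where "rectangle_cover R C Y F" "card F = br R C Y"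
proof -
  have "\<exists>k F. rectangle_cover R C Y F \<and> card F = k"
    using rectangle_cover_singletons[OF assms] by blast
  then have "\<exists>F. rectangle_cover R C Y F \<and> card F = br R C Y"
    unfolding br_eq_Least_rectangle_cover by (rule LeastI_ex)
  then show thesis using that by blast
qed

lemma br_empty_rows: "br {} C Y = 0"
proof -
  have "rectangle_cover {} C Y {}" by (simp add: rectangle_cover_def supp_def)
  then show ?thesis using br_le_card by fastforce
qed

lemma rectangle_cover_insert_row:
  assumes F: "rectangle_cover (R - {r}) C Y F" and "r \<in> R"
  shows "rectangle_cover R C Y (insert ({r}, {j \<in> C. Y r j \<noteq> Zero}) F)"
  unfolding rectangle_cover_def
proof (intro conjI)
  show "finite (insert ({r}, {j \<in> C. Y r j \<noteq> Zero}) F)"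
    using F by (simp add: rectangle_cover_def)
  show "\<forall>(I, J)\<in>insert ({r}, {j \<in> C. Y r j \<noteq> Zero}) F. is_rectangle R C Y I J"
    using F \<open>r \<in> R\<close> by (auto simp: rectangle_cover_def is_rectangle_def)
  show "supp R C Y \<subseteq> (\<Union>(I, J)\<in>insert ({r}, {j \<in> C. Y r j \<noteq> Zero}) F. I \<times> J)"
  proof
    fix x assume x: "x \<in> supp R C Y"
    show "x \<in> (\<Union>(I, J)\<in>insert ({r}, {j \<in> C. Y r j \<noteq> Zero}) F. I \<times> J)"
    proof (cases "fst x = r")
      case True
      then show ?thesis using x by (auto simp: supp_def)
    next
      case False
      then have "x \<in> supp (R - {r}) C Y" using x by (auto simp: supp_def)
      then show ?thesis using F by (auto simp: rectangle_cover_def)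
    qed
  qed
qed

lemma br_le_br_delete_row:
  assumes "finite R" "finite C" "r \<in> R"
  shows "br R C Y \<le> br (R - {r}) C Y + 1"
proof -
  obtain F where F: "rectangle_cover (R - {r}) C Y F" "card F = br (R - {r}) C Y"
    using br_attained assms(1,2) by (metis finite_Diff)
  let ?G = "insert ({r}, {j \<in> C. Y r j \<noteq> Zero}) F"
  have "br R C Y \<le> card ?G"
    using br_le_card rectangle_cover_insert_row[OF F(1) assms(3)] .
  also have "\<dots> \<le> card F + 1"
    using F(1) by (simp add: rectangle_cover_def card_insert_if)
  finally show ?thesis using F(2) by simp
qed

lemma finite_isolated_set_cards:
  assumes "finite R" "finite C"
  shows "finite {card S | S. isolated_set R C Y S}"
proof (rule finite_subset)
  show "{card S | S. isolated_set R C Y S} \<subseteq> {..card (supp R C Y)}"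
    using finite_supp[OF assms] by (auto simp: isolated_set_def intro: card_mono)
qed simp

lemma isolated_set_empty: "isolated_set R C Y {}"
  by (simp add: isolated_set_def)

lemma card_le_isol_num:
  assumes "finite R" "finite C" "isolated_set R C Y S"
  shows "card S \<le> isol_num R C Y"
  unfolding isol_num_def using finite_isolated_set_cards[OF assms(1,2)] assms(3)
  by (auto intro: Max_ge)

lemma isol_num_attained:
  assumes "finite R" "finite C"
  obtains S where "isolated_set R C Y S" "card S = isol_num R C Y"
proof -
  have "isol_num R C Y \<in> {card S | S. isolated_set R C Y S}"
    unfolding isol_num_def using finite_isolated_set_cards[OF assms] isolated_set_empty[of R C Y]
    by (intro Max_in) blast+
  then show thesis using that by auto
qed

text \<open>A rectangle of the whole matrix meets the submatrix in a rectangle of the submatrix.\<close>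

lemma isolated_set_submatrix:
  assumes "isolated_set I J Y S" "I \<subseteq> R" "J \<subseteq> C"
  shows "isolated_set R C Y S"
  unfolding isolated_set_def
proof (intro conjI ballI impI notI)
  show "S \<subseteq> supp R C Y" using assms by (auto simp: isolated_set_def supp_def)
next
  fix x y assume xy: "x \<in> S" "y \<in> S" "x \<noteq> y"
    and "\<exists>I' J'. is_rectangle R C Y I' J' \<and> x \<in> I' \<times> J' \<and> y \<in> I' \<times> J'"
  then obtain I' J' where rect: "is_rectangle R C Y I' J'" "x \<in> I' \<times> J'" "y \<in> I' \<times> J'"
    by blast
  have "x \<in> I \<times> J" "y \<in> I \<times> J"
    using assms(1) xy by (auto simp: isolated_set_def supp_def)
  then have "is_rectangle I J Y (I' \<inter> I) (J' \<inter> J) \<and>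
      x \<in> (I' \<inter> I) \<times> (J' \<inter> J) \<and> y \<in> (I' \<inter> I) \<times> (J' \<inter> J)"
    using rect by (auto simp: is_rectangle_def)
  then show False using assms(1) xy unfolding isolated_set_def by blast
qed

lemma isol_num_mono:
  assumes "finite R" "finite C" "I \<subseteq> R" "J \<subseteq> C"
  shows "isol_num I J Y \<le> isol_num R C Y"
proof -
  obtain S where "isolated_set I J Y S" "card S = isol_num I J Y"
    using isol_num_attained assms by (metis finite_subset)
  then show ?thesis
    using card_le_isol_num[OF assms(1,2)] isolated_set_submatrix assms(3,4) by metis
qed

theorem lemma6:
  fixes R :: "'r set" and C :: "'c set" and Y :: "'r \<Rightarrow> 'c \<Rightarrow> gentry"
  assumes "finite R" and "finite C"
    and "minimally_non_firm R C Y"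
  shows "isol_num R C Y = br R C Y - 1"
proof -
  have non_firm: "isol_num R C Y < br R C Y"
    and proper_firm: "\<And>I J. I \<subseteq> R \<Longrightarrow> J \<subseteq> C \<Longrightarrow> I \<noteq> R \<or> J \<noteq> C \<Longrightarrow> isol_num I J Y = br I J Y"
    using assms(3) unfolding minimally_non_firm_def by blast+
  have "R \<noteq> {}"
  proof
    assume "R = {}"
    then show False using non_firm br_empty_rows[of C Y] by simp
  qed
  then obtain r where r: "r \<in> R" by blast
  have "isol_num (R - {r}) C Y = br (R - {r}) C Y"
    using r by (intro proper_firm) blast+
  moreover have "br R C Y \<le> br (R - {r}) C Y + 1"
    using br_le_br_delete_row assms(1,2) r .
  moreover have "isol_num (R - {r}) C Y \<le> isol_num R C Y"
    using assms(1,2) by (rule isol_num_mono) blast+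
  ultimately show ?thesis using non_firm by linarith
qed

end
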